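(* For any positive integer $k$, $$\sum_{\substack{n\ge1\\ k\mid n\\ p\mid n\Rightarrow p\mid k}}\frac{\log n}{n}=\frac{1}{\phi(k)}\left(\sum_{p\mid k}\frac{\log p}{p-1}+\log k\right)\asymp\frac{\log k}{\phi(k)}.$$
   Context: $p$ denotes primes, $\phi$ is Euler's function. $A\asymp B$ means $c_1B\le A\le c_2B$ for absolute positive constants $c_1,c_2$. *)

theory Defs
  imports "HOL-Analysis.Analysis" "HOL-Number_Theory.Number_Theory"
begin

definition kset :: "nat \<Rightarrow> nat set" where
  "kset k = {n. n \<ge> 1 \<and> k dvd n \<and> (\<forall>p. prime p \<longrightarrow> p dvd n \<longrightarrow> p dvd k)}"

definition kform :: "nat \<Rightarrow> real" where
  "kform k = (1 / real (totient k)) *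
     ((\<Sum>p\<in>prime_factors k. ln (real p) / (real p - 1)) + ln (real k))"

end

theory Submission
  imports Defs
begin

text \<open>Every n in kset k is uniquely k m with m composed of primes dividing k, so the sum
  reduces to sums of 1/m and (ln m)/m over the numbers m whose prime factors lie in a finite
  set P of primes. Both factor as Euler products: adjoining a prime q multiplies the first by
  q/(q-1), and since ln (q^a m) = a ln q + ln m the ratio of the second to the first gains
  the summand ln q/(q-1). With totient k = k \<Prod>(1 - 1/p) this gives the
  closed form, and 0 \<le> \<Sum> ln p/(p-1) \<le> \<Sum> ln p \<le> ln k gives the two-sided bound
  with constants 1 and 2.\<close>

definition smooth_numbers :: "nat set \<Rightarrow> nat set" where
  "smooth_numbers P = {m. m > 0 \<and> prime_factors m \<subseteq> P}"

lemma smooth_numbers_empty: "smooth_numbers {} = {1}"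
  by (auto simp: smooth_numbers_def prime_factorization_empty_iff)

lemma not_dvd_smooth_numbers:
  assumes "prime q" "q \<notin> P" "m \<in> smooth_numbers P"
  shows "\<not> q dvd m"
  using assms by (auto simp: smooth_numbers_def in_prime_factors_iff)

lemma prime_power_mult_in_smooth_numbers:
  assumes q: "prime q" and m: "m \<in> smooth_numbers P"
  shows "q ^ a * m \<in> smooth_numbers (insert q P)"
proof -
  have "prime_factors (q ^ a) \<subseteq> {q}"
    using q by (auto simp: in_prime_factors_iff) (metis prime_dvd_power primes_dvd_imp_eq)
  then show ?thesis
    using q m by (auto simp: smooth_numbers_def prime_factors_product prime_gt_0_nat)
qed

lemma bij_betw_smooth_numbers_insert:
  assumes q: "prime q" and qP: "q \<notin> P"
  shows "bij_betw (\<lambda>(a, m). q ^ a * m) (UNIV \<times> smooth_numbers P) (smooth_numbers (insert q P))"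
proof (rule bij_betw_byWitness[where f' = "\<lambda>n. (multiplicity q n, n div q ^ multiplicity q n)"])
  have "multiplicity q (q ^ a * m) = a" if "m \<in> smooth_numbers P" for a m
    using that q qP by (intro multiplicity_decomposeI not_dvd_smooth_numbers) auto
  then show "\<forall>x\<in>UNIV \<times> smooth_numbers P.
      (\<lambda>n. (multiplicity q n, n div q ^ multiplicity q n)) ((\<lambda>(a, m). q ^ a * m) x) = x"
    using q by (auto simp: prime_gt_0_nat)
  show "\<forall>n\<in>smooth_numbers (insert q P).
      (\<lambda>(a, m). q ^ a * m) (multiplicity q n, n div q ^ multiplicity q n) = n"
    by (simp add: multiplicity_dvd)
  show "(\<lambda>(a, m). q ^ a * m) ` (UNIV \<times> smooth_numbers P) \<subseteq> smooth_numbers (insert q P)"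
    using q by (auto intro: prime_power_mult_in_smooth_numbers)
  show "(\<lambda>n. (multiplicity q n, n div q ^ multiplicity q n)) ` smooth_numbers (insert q P)
      \<subseteq> UNIV \<times> smooth_numbers P"
  proof (rule image_subsetI)
    fix n assume n: "n \<in> smooth_numbers (insert q P)"
    define m where "m = n div q ^ multiplicity q n"
    have n_eq: "n = q ^ multiplicity q n * m"
      by (simp add: m_def multiplicity_dvd)
    have "n > 0"
      using n by (simp add: smooth_numbers_def)
    then have "m > 0" "prime_factors m \<subseteq> prime_factors n"
      using n_eq by (metis gr0I mult_0_right, metis dvd_prime_factors dvd_triv_right less_irrefl)
    moreover have "q \<notin> prime_factors m"
      using multiplicity_decompose[of n q] \<open>n > 0\<close> q not_prime_unit in_prime_factors_imp_dvd
      unfolding m_def by blast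
    ultimately have "m \<in> smooth_numbers P"
      using n by (auto simp: smooth_numbers_def)
    then show "(multiplicity q n, n div q ^ multiplicity q n) \<in> UNIV \<times> smooth_numbers P"
      by (simp add: m_def)
  qed
qed

lemma has_sum_smooth_numbers_insert_iff:
  assumes "prime q" "q \<notin> P"
  shows "(f has_sum s) (smooth_numbers (insert q P)) \<longleftrightarrow>
         ((\<lambda>(a, m). f (q ^ a * m)) has_sum s) (UNIV \<times> smooth_numbers P)"
  using has_sum_reindex_bij_betw[OF bij_betw_smooth_numbers_insert[OF assms], of f s]
  by (simp add: case_prod_unfold)

lemma has_sum_geometric:
  fixes x :: real
  assumes "0 \<le> x" "x < 1"
  shows "((\<lambda>a. x ^ a) has_sum 1 / (1 - x)) UNIV"
  by (rule sums_nonneg_imp_has_sum) (use geometric_sums[of x] assms in auto)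

lemma has_sum_geometric_deriv:
  fixes x :: real
  assumes "0 \<le> x" "x < 1"
  shows "((\<lambda>a. real a * x ^ a) has_sum x / (1 - x)\<^sup>2) UNIV"
proof (rule sums_nonneg_imp_has_sum)
  have "(\<lambda>n. x * (real (Suc n) * x ^ n)) sums (x * (1 / (1 - x)\<^sup>2))"
    by (intro sums_mult geometric_deriv_sums) (use assms in auto)
  then have "(\<lambda>n. real (Suc n) * x ^ Suc n) sums (x / (1 - x)\<^sup>2)"
    by (simp add: algebra_simps)
  then show "(\<lambda>a. real a * x ^ a) sums (x / (1 - x)\<^sup>2)"
    using sums_Suc_iff[of "\<lambda>a. real a * x ^ a"] by simp
qed (use assms in auto)

lemma has_sum_product_nonneg:
  fixes f :: "'a \<Rightarrow> real" and g :: "'b \<Rightarrow> real"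
  assumes "\<And>x. x \<in> A \<Longrightarrow> f x \<ge> 0" "\<And>y. y \<in> B \<Longrightarrow> g y \<ge> 0"
    and f: "(f has_sum a) A" and g: "(g has_sum b) B"
  shows "((\<lambda>(x, y). f x * g y) has_sum a * b) (A \<times> B)"
proof -
  have fibres: "((\<lambda>y. f x * g y) has_sum f x * b) B" for x
    using g by (rule has_sum_cmult_right)
  have "((\<lambda>x. f x * b) has_sum a * b) A"
    using f by (rule has_sum_cmult_left)
  moreover from this have "(\<lambda>(x, y). f x * g y) summable_on A \<times> B"
    using fibres assms(1,2)
    by (intro summable_on_SigmaI[where g = "\<lambda>x. f x * b"]) (auto dest: has_sum_imp_summable)
  ultimately show ?thesis
    using fibres by (intro has_sum_SigmaI[where g = "\<lambda>x. f x * b"]) auto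
qed

lemma has_sum_inverse_smooth_numbers:
  assumes "finite P" "\<forall>p\<in>P. prime p"
  shows "((\<lambda>m. 1 / real m) has_sum (\<Prod>p\<in>P. real p / (real p - 1))) (smooth_numbers P)"
  using assms
proof (induction P rule: finite_induct)
  case empty
  then show ?case by (simp add: smooth_numbers_empty has_sum_finite_iff)
next
  case (insert q P)
  define A where "A = (\<Prod>p\<in>P. real p / (real p - 1))"
  have q: "prime q" and "real q > 1"
    using insert.prems prime_gt_1_nat by auto
  then have "((\<lambda>(a, m). (1 / real q) ^ a * (1 / real m)) has_sum 1 / (1 - 1 / real q) * A)
      (UNIV \<times> smooth_numbers P)"
    using insert.IH insert.prems unfolding A_def
    by (intro has_sum_product_nonneg has_sum_geometric) auto
  moreover have "1 / (1 - 1 / real q) = real q / (real q - 1)"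
    using \<open>real q > 1\<close> by (simp add: field_simps)
  ultimately have "((\<lambda>(a, m). 1 / real (q ^ a * m)) has_sum real q / (real q - 1) * A)
      (UNIV \<times> smooth_numbers P)"
    by (simp add: power_one_over)
  then show ?case
    using insert.hyps q by (simp add: has_sum_smooth_numbers_insert_iff A_def)
qed

lemma ln_div_power_mult:
  assumes "q > 0" "m > 0"
  shows "ln (real (q ^ a * m)) / real (q ^ a * m) =
    ln (real q) * (real a * (1 / real q) ^ a) * (1 / real m) + (1 / real q) ^ a * (ln (real m) / real m)"
  using assms by (simp add: ln_mult ln_realpow power_one_over field_simps)

lemma has_sum_ln_div_smooth_numbers:
  assumes "finite P" "\<forall>p\<in>P. prime p"
  shows "((\<lambda>m. ln (real m) / real m) has_sum
           (\<Prod>p\<in>P. real p / (real p - 1)) * (\<Sum>p\<in>P. ln (real p) / (real p - 1)))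
         (smooth_numbers P)"
  using assms
proof (induction P rule: finite_induct)
  case empty
  then show ?case by (simp add: smooth_numbers_empty has_sum_finite_iff)
next
  case (insert q P)
  define A where "A = (\<Prod>p\<in>P. real p / (real p - 1))"
  define L where "L = (\<Sum>p\<in>P. ln (real p) / (real p - 1))"
  define x where "x = 1 / real q"
  have q: "prime q" and "real q > 1" and P: "\<forall>p\<in>P. prime p"
    using insert.prems prime_gt_1_nat by auto
  then have x: "0 \<le> x" "x < 1"
    by (auto simp: x_def)
  have "((\<lambda>(a, m). (ln (real q) * (real a * x ^ a)) * (1 / real m)) has_sum
      (ln (real q) * (x / (1 - x)\<^sup>2)) * A) (UNIV \<times> smooth_numbers P)"
    using x \<open>real q > 1\<close> insert.hyps(1) P unfolding A_def
    by (intro has_sum_product_nonneg has_sum_cmult_right has_sum_geometric_deriv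
        has_sum_inverse_smooth_numbers) auto
  moreover have "((\<lambda>(a, m). x ^ a * (ln (real m) / real m)) has_sum 1 / (1 - x) * (A * L))
      (UNIV \<times> smooth_numbers P)"
    using x insert.IH P unfolding A_def L_def
    by (intro has_sum_product_nonneg has_sum_geometric) (auto simp: smooth_numbers_def)
  ultimately have "((\<lambda>y. (\<lambda>(a, m). (ln (real q) * (real a * x ^ a)) * (1 / real m)) y
        + (\<lambda>(a, m). x ^ a * (ln (real m) / real m)) y) has_sum
      ln (real q) * (x / (1 - x)\<^sup>2) * A + 1 / (1 - x) * (A * L)) (UNIV \<times> smooth_numbers P)"
    by (rule has_sum_add)
  also have "?this \<longleftrightarrow> ((\<lambda>(a, m). ln (real (q ^ a * m)) / real (q ^ a * m)) has_sum
      ln (real q) * (x / (1 - x)\<^sup>2) * A + 1 / (1 - x) * (A * L)) (UNIV \<times> smooth_numbers P)"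
  proof (intro has_sum_cong, clarify)
    fix a m assume "m \<in> smooth_numbers P"
    then show "ln (real q) * (real a * x ^ a) * (1 / real m) + x ^ a * (ln (real m) / real m) =
        ln (real (q ^ a * m)) / real (q ^ a * m)"
      using ln_div_power_mult[of q m a] q by (simp add: x_def smooth_numbers_def prime_gt_0_nat)
  qed
  also have "ln (real q) * (x / (1 - x)\<^sup>2) * A + 1 / (1 - x) * (A * L) =
      real q / (real q - 1) * A * (ln (real q) / (real q - 1) + L)"
    using \<open>real q > 1\<close> unfolding x_def
    by (simp add: power2_eq_square divide_simps) (simp add: algebra_simps)
  finally show ?case
    using insert.hyps q
    by (simp add: has_sum_smooth_numbers_insert_iff A_def L_def algebra_simps)
qed

lemma bij_betw_kset:
  assumes k: "k > 0"
  shows "bij_betw (\<lambda>m. k * m) (smooth_numbers (prime_factors k)) (kset k)"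
proof (rule bij_betw_imageI)
  show "inj_on (\<lambda>m. k * m) (smooth_numbers (prime_factors k))"
    using k by (auto intro: inj_onI)
  show "(\<lambda>m. k * m) ` smooth_numbers (prime_factors k) = kset k"
  proof (intro equalityI image_subsetI subsetI)
    fix m assume m: "m \<in> smooth_numbers (prime_factors k)"
    have "p dvd k" if "prime p" "p dvd k * m" for p
      using that m by (auto simp: prime_dvd_mult_iff smooth_numbers_def in_prime_factors_iff)
    then show "k * m \<in> kset k"
      using k m by (auto simp: kset_def smooth_numbers_def)
  next
    fix n assume n: "n \<in> kset k"
    then obtain m where n_eq: "n = k * m" and "n > 0"
      by (auto simp: kset_def)
    then have "prime_factors m \<subseteq> prime_factors k"
      using n by (auto simp: kset_def in_prime_factors_iff)
    with n_eq \<open>n > 0\<close> have "m \<in> smooth_numbers (prime_factors k)"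
      by (simp add: smooth_numbers_def)
    with n_eq show "n \<in> (\<lambda>m. k * m) ` smooth_numbers (prime_factors k)"
      by blast
  qed
qed

lemma totient_mult_prod_prime_factors:
  assumes "k > 0"
  shows "real (totient k) * (\<Prod>p\<in>prime_factors k. real p / (real p - 1)) = real k"
proof -
  have "(\<Prod>p\<in>prime_factors k. 1 - 1 / real p) * (\<Prod>p\<in>prime_factors k. real p / (real p - 1)) =
      (\<Prod>p\<in>prime_factors k. (1 - 1 / real p) * (real p / (real p - 1)))"
    by (rule prod.distrib[symmetric])
  also have "\<dots> = 1"
  proof (intro prod.neutral ballI)
    fix p assume "p \<in> prime_factors k"
    then have "real p > 1"
      using prime_gt_1_nat by (auto simp: in_prime_factors_iff)
    then show "(1 - 1 / real p) * (real p / (real p - 1)) = 1"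
      by (simp add: field_simps)
  qed
  finally show ?thesis
    by (simp add: totient_formula2 mult.assoc)
qed

lemma has_sum_ln_div_kset:
  assumes k: "k > 0"
  shows "((\<lambda>n. ln (real n) / real n) has_sum kform k) (kset k)"
proof -
  define P where "P = prime_factors k"
  define A where "A = (\<Prod>p\<in>P. real p / (real p - 1))"
  define L where "L = (\<Sum>p\<in>P. ln (real p) / (real p - 1))"
  have P: "finite P" "\<forall>p\<in>P. prime p"
    by (auto simp: P_def)
  have A_eq: "A = real k / real (totient k)"
    using totient_mult_prod_prime_factors[OF k] k by (simp add: A_def P_def field_simps)
  have "((\<lambda>m. ln (real k) / real k * (1 / real m) + 1 / real k * (ln (real m) / real m)) has_sum
      ln (real k) / real k * A + 1 / real k * (A * L)) (smooth_numbers P)"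
    unfolding A_def L_def
    by (intro has_sum_add has_sum_cmult_right has_sum_inverse_smooth_numbers
        has_sum_ln_div_smooth_numbers P)
  also have "ln (real k) / real k * A + 1 / real k * (A * L) = kform k"
    using k by (simp add: A_eq kform_def L_def P_def field_simps)
  also have "((\<lambda>m. ln (real k) / real k * (1 / real m) + 1 / real k * (ln (real m) / real m))
      has_sum kform k) (smooth_numbers P) \<longleftrightarrow>
      ((\<lambda>m. ln (real (k * m)) / real (k * m)) has_sum kform k) (smooth_numbers P)"
    using k by (intro has_sum_cong) (auto simp: smooth_numbers_def ln_mult field_simps)
  also have "\<dots> \<longleftrightarrow> ((\<lambda>n. ln (real n) / real n) has_sum kform k) (kset k)"
    using has_sum_reindex_bij_betw[OF bij_betw_kset[OF k]] unfolding P_def .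
  finally show ?thesis .
qed

lemma sum_ln_prime_factors_le:
  assumes k: "k > 0"
  shows "(\<Sum>p\<in>prime_factors k. ln (real p)) \<le> ln (real k)"
proof -
  have "(\<Prod>p\<in>prime_factors k. p) \<le> (\<Prod>p\<in>prime_factors k. p ^ multiplicity p k)"
    by (intro prod_mono conjI self_le_power)
       (auto simp: prime_factors_multiplicity Suc_le_eq prime_gt_0_nat)
  also have "\<dots> = k"
    using prime_factorization_nat[OF k] by simp
  finally have "(\<Prod>p\<in>prime_factors k. p) \<le> k" .
  moreover have "(\<Prod>p\<in>prime_factors k. p) > 0"
    by (rule prod_pos) (auto simp: in_prime_factors_iff prime_gt_0_nat)
  ultimately have "ln (real (\<Prod>p\<in>prime_factors k. p)) \<le> ln (real k)"
    using k by (subst ln_le_cancel_iff) (simp_all del: of_nat_prod)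
  moreover have "ln (\<Prod>p\<in>prime_factors k. real p) = (\<Sum>p\<in>prime_factors k. ln (real p))"
    by (rule ln_prod) (auto simp: in_prime_factors_iff prime_gt_0_nat)
  ultimately show ?thesis
    by simp
qed

lemma kform_bounds:
  assumes k: "k > 0"
  shows "ln (real k) / real (totient k) \<le> kform k"
    and "kform k \<le> 2 * (ln (real k) / real (totient k))"
proof -
  define L where "L = (\<Sum>p\<in>prime_factors k. ln (real p) / (real p - 1))"
  have p_ge_2: "real p \<ge> 2" and ln_p: "ln (real p) \<ge> 0" if "p \<in> prime_factors k" for p
    using that prime_ge_2_nat by (auto simp: in_prime_factors_iff)
  have "0 \<le> L"
    unfolding L_def using p_ge_2 ln_p by (intro sum_nonneg divide_nonneg_nonneg) force+
  moreover have "L \<le> (\<Sum>p\<in>prime_factors k. ln (real p))"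
    unfolding L_def
  proof (intro sum_mono)
    fix p assume "p \<in> prime_factors k"
    then show "ln (real p) / (real p - 1) \<le> ln (real p)"
      using divide_left_mono[of 1 "real p - 1" "ln (real p)"] p_ge_2 ln_p by simp
  qed
  ultimately have "0 \<le> L" "L \<le> ln (real k)"
    using sum_ln_prime_factors_le[OF k] by linarith+
  moreover have "kform k = (L + ln (real k)) / real (totient k)"
    by (simp add: kform_def L_def)
  moreover have "real (totient k) > 0"
    using k by simp
  ultimately show "ln (real k) / real (totient k) \<le> kform k"
    and "kform k \<le> 2 * (ln (real k) / real (totient k))"
    by (simp_all add: divide_right_mono)
qed

theorem lemma3p3:
  shows "(\<forall>k::nat. k \<ge> 1 \<longrightarrow>
            ((\<lambda>n. ln (real n) / real n) has_sum kform k) (kset k))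
       \<and> (\<exists>c1 c2::real. c1 > 0 \<and> c2 > 0 \<and>
            (\<forall>k::nat. k \<ge> 1 \<longrightarrow>
               c1 * (ln (real k) / real (totient k)) \<le> kform k \<and>
               kform k \<le> c2 * (ln (real k) / real (totient k))))"
  using has_sum_ln_div_kset kform_bounds
  by (intro conjI allI impI exI[of _ 1] exI[of _ 2]) auto

end
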